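(* Let $(a_k)_{k\in\mathbb N}$ be positive numbers with $\sum_ka_k=\infty$, and suppose there exist $C\ge1$, $\alpha\in(0,1)$ and $k_*$ such that $a_{k_2}\le Ca_{k_1}$ for all integers $k_*\le k_1\le k_2\le k_1+k_1^\alpha$. Let $b_k=\min\{a_k,k^{-\alpha}\}$. Then $b_{k_2}\le Cb_{k_1}$ for all integers $k_*\le k_1\le k_2\le k_1+k_1^\alpha$, and $\sum_kb_k=\infty$. *)

theory Defs
  imports Complex_Main
begin

end

theory Submission
  imports Defs
begin

text \<open>
  Capping by \<open>k powr -\<alpha>\<close> preserves the window condition because \<open>k powr -\<alpha>\<close> is decreasing
  and \<open>C \<ge> 1\<close>. If \<open>b\<close> were summable, then \<open>b\<close> could not agree with \<open>a\<close> eventually, so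
  \<open>b k\<^sub>1 = k\<^sub>1 powr -\<alpha>\<close> for arbitrarily large \<open>k\<^sub>1\<close>. The window condition then keeps \<open>b\<close> above
  \<open>k\<^sub>1 powr -\<alpha> / C\<close> on the roughly \<open>(k\<^sub>1/2) powr \<alpha>\<close> indices preceding \<open>k\<^sub>1\<close>, so these
  blocks of the series have sum at least \<open>2 powr -\<alpha> / C\<close>, violating the Cauchy criterion.
\<close>

definition window_comparable :: "real \<Rightarrow> real \<Rightarrow> nat \<Rightarrow> (nat \<Rightarrow> real) \<Rightarrow> bool" where
  "window_comparable C \<alpha> k\<^sub>0 f \<longleftrightarrow>
     (\<forall>k1 k2. 1 \<le> k1 \<and> k\<^sub>0 \<le> k1 \<and> k1 \<le> k2 \<and> real k2 \<le> real k1 + real k1 powr \<alpha>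
                \<longrightarrow> f k2 \<le> C * f k1)"

lemma window_comparable_min_antitone:
  assumes f: "window_comparable C \<alpha> k\<^sub>0 f" and C: "C \<ge> 1"
    and g_antitone: "\<And>m n. 1 \<le> m \<Longrightarrow> m \<le> n \<Longrightarrow> g n \<le> g m"
    and g_nonneg: "\<And>k. g k \<ge> 0"
  shows "window_comparable C \<alpha> k\<^sub>0 (\<lambda>k. min (f k) (g k))"
  unfolding window_comparable_def
proof (intro allI impI)
  fix k1 k2 :: nat
  assume window: "1 \<le> k1 \<and> k\<^sub>0 \<le> k1 \<and> k1 \<le> k2 \<and> real k2 \<le> real k1 + real k1 powr \<alpha>"
  then have "f k2 \<le> C * f k1"
    using f unfolding window_comparable_def by blast
  moreover have "g k2 \<le> C * g k1"
  proof -
    have "g k2 \<le> g k1"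
      using g_antitone window by blast
    also have "\<dots> \<le> C * g k1"
      using C g_nonneg[of k1] by (simp add: mult_le_cancel_right1)
    finally show ?thesis .
  qed
  ultimately show "min (f k2) (g k2) \<le> C * min (f k1) (g k1)"
    using C by (simp add: min_mult_distrib_left min.coboundedI1 min.coboundedI2)
qed

lemma window_comparable_block_sum_ge:
  assumes f: "window_comparable C \<alpha> k\<^sub>0 f" and C: "C > 0"
    and \<alpha>: "0 < \<alpha>" "\<alpha> < 1"
    and k1: "k1 \<ge> 2" "k1 \<ge> 2 * k\<^sub>0" and f_nonneg: "f k1 \<ge> 0"
  obtains lo where "real lo \<ge> real k1 / 2"
    and "(real k1 / 2) powr \<alpha> * f k1 / C \<le> sum f {lo..<Suc k1}"
proof -
  define x where "x = real k1 / 2"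
  have x: "x \<ge> 1" "x \<ge> real k\<^sub>0"
    using k1 by (auto simp: x_def)
  have "x powr \<alpha> \<le> x"
    using powr_mono[of \<alpha> 1 x] x \<alpha> by simp
  define L where "L = nat \<lfloor>x powr \<alpha>\<rfloor>"
  have L: "real L \<le> x powr \<alpha>" "x powr \<alpha> \<le> real L + 1"
    using x by (simp_all add: L_def of_nat_nat)
  have L_le: "L \<le> k1"
    using L \<open>x powr \<alpha> \<le> x\<close> x by (simp add: x_def)
  define lo where "lo = k1 - L"
  have lo: "real lo \<ge> x"
    using L \<open>x powr \<alpha> \<le> x\<close> L_le by (simp add: lo_def x_def)
  have lower: "f k1 / C \<le> f k" if k: "k \<in> {lo..<Suc k1}" for k
  proof -
    have kx: "real k \<ge> x"
      using k lo by auto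
    have "x powr \<alpha> \<le> real k powr \<alpha>"
      using kx x \<alpha> by (intro powr_mono2) auto
    then have "real k1 \<le> real k + real k powr \<alpha>"
      using k L(1) by (auto simp: lo_def)
    then have "f k1 \<le> C * f k"
      using f k kx x unfolding window_comparable_def by auto
    then show ?thesis
      using C by (simp add: divide_le_eq mult.commute)
  qed
  have "x powr \<alpha> * f k1 / C \<le> (real L + 1) * f k1 / C"
    using L(2) C f_nonneg by (intro divide_right_mono mult_right_mono) auto
  also have "\<dots> = (\<Sum>k\<in>{lo..<Suc k1}. f k1 / C)"
    using L_le by (simp add: lo_def)
  also have "\<dots> \<le> sum f {lo..<Suc k1}"
    using lower by (rule sum_mono)
  finally show ?thesis
    using that lo by (simp add: x_def)
qed

lemma not_summable_if_block_sums_ge: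
  fixes f :: "nat \<Rightarrow> real"
  assumes "e > 0" and "\<And>N. \<exists>m\<ge>N. \<exists>n. e \<le> sum f {m..<n}"
  shows "\<not> summable f"
proof
  assume "summable f"
  then obtain N where N: "\<forall>m\<ge>N. \<forall>n. \<bar>sum f {m..<n}\<bar> < e"
    using \<open>e > 0\<close> unfolding summable_Cauchy real_norm_def by blast
  obtain m n where "m \<ge> N" "e \<le> sum f {m..<n}"
    using assms(2) by blast
  with N show False
    by (meson abs_ge_self le_less_trans not_le)
qed

lemma not_summable_min_powr:
  fixes a :: "nat \<Rightarrow> real"
  assumes a: "\<not> summable a" and C: "C > 0" and \<alpha>: "0 < \<alpha>" "\<alpha> < 1"
    and b: "window_comparable C \<alpha> k\<^sub>0 (\<lambda>k. min (a k) (real k powr -\<alpha>))"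
  shows "\<not> summable (\<lambda>k. min (a k) (real k powr -\<alpha>))" (is "\<not> summable ?b")
proof
  assume summable: "summable ?b"
  have "\<not> (\<forall>\<^sub>F k in sequentially. ?b k = a k)"
    using a summable summable_cong[of ?b a] by blast
  then have "\<exists>k\<ge>N. ?b k \<noteq> a k" for N
    unfolding eventually_sequentially by blast
  then have capped: "\<exists>k\<ge>N. ?b k = real k powr -\<alpha>" for N
    by (metis min_def)
  have "\<exists>m\<ge>N. \<exists>n. 2 powr -\<alpha> / C \<le> sum ?b {m..<n}" for N
  proof -
    obtain k1 where k1: "k1 \<ge> 2 * (N + k\<^sub>0 + 1)" and b_k1: "?b k1 = real k1 powr -\<alpha>"
      using capped by blast
    then have "k1 \<ge> 2" "k1 \<ge> 2 * k\<^sub>0" "?b k1 \<ge> 0"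
      by simp_all
    then obtain lo where lo: "real lo \<ge> real k1 / 2"
      and sum: "(real k1 / 2) powr \<alpha> * ?b k1 / C \<le> sum ?b {lo..<Suc k1}"
      using window_comparable_block_sum_ge[OF b C \<alpha>] by blast
    have "(real k1 / 2) powr \<alpha> * ?b k1 = 2 powr -\<alpha>"
      unfolding b_k1 using \<open>k1 \<ge> 2\<close> by (simp add: powr_divide powr_minus_divide)
    moreover have "lo \<ge> N"
      using lo k1 by (simp add: field_simps)
    ultimately show ?thesis
      using sum by metis
  qed
  then show False
    using not_summable_if_block_sums_ge[of "2 powr -\<alpha> / C" ?b] summable C by simp
qed

theorem lemma4p3:
  fixes a b :: "nat \<Rightarrow> real" and C \<alpha> :: real and kstar :: nat
  assumes pos: "\<forall>k\<ge>1. a k > 0"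
    and div: "\<not> summable a"
    and C: "C \<ge> 1"
    and alpha: "0 < \<alpha>" "\<alpha> < 1"
    and kstar: "\<forall>k1 k2. 1 \<le> k1 \<and> kstar \<le> k1 \<and> k1 \<le> k2 \<and> real k2 \<le> real k1 + real k1 powr \<alpha>
                  \<longrightarrow> a k2 \<le> C * a k1"
    and b_def: "\<forall>k. b k = min (a k) (real k powr (-\<alpha>))"
  shows "(\<forall>k1 k2. 1 \<le> k1 \<and> kstar \<le> k1 \<and> k1 \<le> k2 \<and> real k2 \<le> real k1 + real k1 powr \<alpha>
                  \<longrightarrow> b k2 \<le> C * b k1) \<and> \<not> summable b"
proof -
  have b_eq: "b = (\<lambda>k. min (a k) (real k powr -\<alpha>))"
    using b_def by auto
  have "window_comparable C \<alpha> kstar a"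
    using kstar unfolding window_comparable_def .
  then have b_comparable: "window_comparable C \<alpha> kstar b"
    unfolding b_eq using C alpha
    by (intro window_comparable_min_antitone) (auto intro: powr_mono2')
  moreover have "\<not> summable b"
    using not_summable_min_powr[OF div _ alpha, of C kstar] b_comparable C unfolding b_eq by simp
  ultimately show ?thesis
    unfolding window_comparable_def by blast
qed

end
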